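(* Let $\mathcal F$ be any r-forest in $G$. Then there exists a $\hat G$-r-forest $\hat{\mathcal F}$ such that $\hat F(\hat{\mathcal F})\le F(\mathcal F)$ and $\hat{\mathcal F}$ has at most $2r-2$ non-terminal vertices.
   Context: Let $G=(V,E)$ be a connected undirected network with $n$ vertices and edge lengths $c_e>0$. Let $\mathcal R=\{\{v_1,u_1\},\dots,\{v_r,u_r\}\}$ be a set of $r\ge2$ relevant pairs (r-pairs) of vertices, with $r$ a fixed constant. The objective $\Phi$ is a non-decreasing function of the connection times $(t_{\{v_i,u_i\}})_{i=1}^r$, computable in $O(r)$ time from them. A terminal vertex is a vertex belonging to some r-pair. An r-forest is a subnetwork $\mathcal F$ of the network such that: (a) $\mathcal F$ is a forest; (b) every r-pair $\{v,u\}$ is joined by a (unique) path $P_{\mathcal F}(v,u)$ in $\mathcal F$; (c) every edge of $\mathcal F$ lies on $P_{\mathcal F}(v,u)$ for some r-pair $\{v,u\}$. For an r-forest $\mathcal F$, consider orderings $(e_1,\dots,e_f)$ of all edges of $\mathcal F$, built consecutively at unit speed from time $0$, so that $e_k$ is completed at time $\sum_{j\le k}c_{e_j}$. The connection time of an r-pair is the completion time of the last-built edge of its path in $\mathcal F$. $F(\mathcal F)$ denotes the minimum of $\Phi$ over all such orderings. This is the best objective value achievable when $\mathcal F$ is the set of edges built before all r-pairs are connected. $\hat G$ is the metric closure of $G$: the complete network on $V$ in which the length of edge $(u,v)$ equals the shortest-path distance between $u$ and $v$ in $G$. A $\hat G$-r-forest is an r-forest in $\hat G$ (for the same r-pairs).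 For a $\hat G$-r-forest $\hat{\mathcal F}$, $\hat F(\hat{\mathcal F})$ is defined as $F(\cdot)$ above but with $\hat G$-lengths. A non-terminal vertex of $\hat{\mathcal F}$ is a vertex of $\hat{\mathcal F}$ that is not a terminal vertex. *)

theory Defs
  imports Complex_Main
begin

text \<open>Undirected simple networks: an edge is a two-element vertex set.
  Edge lengths are a function on edges.\<close>

definition is_path :: "'v set set \<Rightarrow> 'v \<Rightarrow> 'v \<Rightarrow> 'v list \<Rightarrow> bool" where
  "is_path F v u p \<longleftrightarrow> p \<noteq> [] \<and> hd p = v \<and> last p = u \<and> distinct p \<and>
     (\<forall>i. Suc i < length p \<longrightarrow> {p ! i, p ! Suc i} \<in> F)"

definition path_edges :: "'v list \<Rightarrow> 'v set set" where
  "path_edges p = {{p ! i, p ! Suc i} | i. Suc i < length p}"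

definition path_length :: "('v set \<Rightarrow> real) \<Rightarrow> 'v list \<Rightarrow> real" where
  "path_length c p = (\<Sum>i < length p - 1. c {p ! i, p ! Suc i})"

definition is_cycle :: "'v set set \<Rightarrow> 'v list \<Rightarrow> bool" where
  "is_cycle F p \<longleftrightarrow> length p \<ge> 3 \<and> distinct p \<and>
     (\<forall>i. Suc i < length p \<longrightarrow> {p ! i, p ! Suc i} \<in> F) \<and> {last p, hd p} \<in> F"

definition is_forest :: "'v set set \<Rightarrow> bool" where
  "is_forest F \<longleftrightarrow> \<not> (\<exists>p. is_cycle F p)"

definition network :: "'v set \<Rightarrow> 'v set set \<Rightarrow> ('v set \<Rightarrow> real) \<Rightarrow> bool" where
  "network V E c \<longleftrightarrow> finite V \<and> (\<forall>e\<in>E. \<exists>x y. x \<in> V \<and> y \<in> V \<and> x \<noteq> y \<and> e = {x, y}) \<and>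
     (\<forall>e\<in>E. c e > 0) \<and> (\<forall>x\<in>V. \<forall>y\<in>V. \<exists>p. is_path E x y p)"

text \<open>r-forest (conditions (a),(b),(c)); R is the list of r-pairs.\<close>
definition r_forest :: "'v set set \<Rightarrow> ('v \<times> 'v) list \<Rightarrow> 'v set set \<Rightarrow> bool" where
  "r_forest E R F \<longleftrightarrow> F \<subseteq> E \<and> is_forest F \<and>
     (\<forall>(v, u) \<in> set R. \<exists>p. is_path F v u p) \<and>
     (\<forall>e \<in> F. \<exists>(v, u) \<in> set R. \<exists>p. is_path F v u p \<and> e \<in> path_edges p)"

text \<open>Connection time of the r-pair (v,u) when the edges of F are built in the order es:
  completion time of the last-built edge of the (unique) path between v and u in F.\<close>
definition conn_time :: "('v set \<Rightarrow> real) \<Rightarrow> 'v set set \<Rightarrow> 'v set list \<Rightarrow> 'v \<times> 'v \<Rightarrow> real" where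
  "conn_time c F es vu = (case vu of (v, u) \<Rightarrow>
     Max {sum_list (map c (take (Suc k) es)) | k. k < length es \<and>
            es ! k \<in> path_edges (SOME p. is_path F v u p)})"

definition F_val :: "('v set \<Rightarrow> real) \<Rightarrow> ('v \<times> 'v) list \<Rightarrow> (real list \<Rightarrow> real) \<Rightarrow> 'v set set \<Rightarrow> real" where
  "F_val c R \<Phi> F = Min {\<Phi> (map (conn_time c F es) R) | es. distinct es \<and> set es = F}"

text \<open>Metric closure: complete graph on V, edge length = shortest-path distance in G.\<close>
definition closure_edges :: "'v set \<Rightarrow> 'v set set" where
  "closure_edges V = {{x, y} | x y. x \<in> V \<and> y \<in> V \<and> x \<noteq> y}"

definition closure_length :: "'v set set \<Rightarrow> ('v set \<Rightarrow> real) \<Rightarrow> 'v set \<Rightarrow> real" where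
  "closure_length E c e = Min {path_length c p | p x y. e = {x, y} \<and> is_path E x y p}"

definition terminals :: "('v \<times> 'v) list \<Rightarrow> 'v set" where
  "terminals R = fst ` set R \<union> snd ` set R"

definition forest_vertices :: "'v set set \<Rightarrow> 'v set" where
  "forest_vertices F = \<Union> F"

definition nonterminal_vertices :: "('v \<times> 'v) list \<Rightarrow> 'v set set \<Rightarrow> 'v set" where
  "nonterminal_vertices R F = forest_vertices F - terminals R"

end

theory Submission
  imports Defs
begin

(* Embedding F into the metric closure does not increase its value, since closure lengths are
   at most the original ones.  Then, as long as some non-terminal vertex w has degree two, with
   neighbours a and b, replace the edges {a, w} and {w, b} by {a, b}.  The result is again an
   r-forest, and building {a, b} in the slot of the later of the two removed edges (dropping the
   earlier one) completes every edge no later: by the triangle inequality {a, b} is at most as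
   long as the two removed edges together.  As \<Phi> is monotone, the value does not increase.
   Once every non-terminal vertex has degree at least three, counting incidences in the forest
   gives 3 N + M \<le> 2 |F| \<le> 2 (N + M - 1) for N non-terminal and M terminal vertices, hence
   N \<le> M - 2 \<le> 2 r - 2. *)

section \<open>Paths and walks as vertex lists\<close>

lemma path_edges_Nil [simp]: "path_edges [] = {}"
  and path_edges_singleton [simp]: "path_edges [x] = {}"
  by (simp_all add: path_edges_def)

lemma path_edges_Cons_Cons [simp]:
  "path_edges (x # y # xs) = insert {x, y} (path_edges (y # xs))"
proof -
  have "{i. Suc i < length (x # y # xs)} = insert 0 (Suc ` {i. Suc i < length (y # xs)})"
    by (auto simp: image_iff less_Suc_eq_0_disj)
  then show ?thesis
    unfolding path_edges_def by (auto simp: setcompr_eq_image image_image)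
qed

lemma path_edges_Cons: "xs \<noteq> [] \<Longrightarrow> path_edges (x # xs) = insert {x, hd xs} (path_edges xs)"
  by (cases xs) auto

lemma path_edges_append_nonempty:
  "xs \<noteq> [] \<Longrightarrow> ys \<noteq> [] \<Longrightarrow>
    path_edges (xs @ ys) = insert {last xs, hd ys} (path_edges xs \<union> path_edges ys)"
  by (induction xs rule: list_nonempty_induct) (auto simp: path_edges_Cons)

lemma path_length_Nil [simp]: "path_length c [] = 0"
  and path_length_singleton [simp]: "path_length c [x] = 0"
  by (simp_all add: path_length_def)

lemma path_length_Cons_Cons [simp]:
  "path_length c (x # y # xs) = c {x, y} + path_length c (y # xs)"
  unfolding path_length_def by (simp add: sum.lessThan_Suc_shift del: sum.lessThan_Suc)

lemma path_edges_append:
  "path_edges (xs @ y # ys) = path_edges (xs @ [y]) \<union> path_edges (y # ys)"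
  by (induction xs rule: induct_list012) auto

lemma path_length_append:
  "path_length c (xs @ y # ys) = path_length c (xs @ [y]) + path_length c (y # ys)"
  by (induction xs rule: induct_list012) auto

lemma path_edges_rev [simp]: "path_edges (rev p) = path_edges p"
proof (induction p rule: induct_list012)
  case (3 x y zs)
  then show ?case using path_edges_append[of "rev zs" y "[x]"] by (auto simp: insert_commute)
qed simp_all

lemma path_length_rev [simp]: "path_length c (rev p) = path_length c p"
proof (induction p rule: induct_list012)
  case (3 x y zs)
  then show ?case using path_length_append[of c "rev zs" y "[x]"] by (simp add: insert_commute)
qed simp_all

lemma set_eq_insert_hd_Union_path_edges:
  "p \<noteq> [] \<Longrightarrow> set p = insert (hd p) (\<Union> (path_edges p))"
  by (induction p rule: induct_list012) auto

lemma path_edge_subset_set: "e \<in> path_edges p \<Longrightarrow> e \<subseteq> set p"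
  unfolding path_edges_def by auto

lemma finite_path_edges [simp]: "finite (path_edges p)"
  unfolding path_edges_def by (rule finite_image_set, rule finite_subset[of _ "{..<length p}"]) auto

definition is_walk :: "'v set set \<Rightarrow> 'v \<Rightarrow> 'v \<Rightarrow> 'v list \<Rightarrow> bool" where
  "is_walk F v u p \<longleftrightarrow> p \<noteq> [] \<and> hd p = v \<and> last p = u \<and> path_edges p \<subseteq> F"

lemma is_path_iff_walk: "is_path F v u p \<longleftrightarrow> is_walk F v u p \<and> distinct p"
  unfolding is_path_def is_walk_def path_edges_def by blast

lemma is_cycle_iff:
  "is_cycle F q \<longleftrightarrow> 3 \<le> length q \<and> distinct q \<and> path_edges q \<subseteq> F \<and> {last q, hd q} \<in> F"
  unfolding is_cycle_def path_edges_def by blast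

lemma is_walk_mono: "is_walk F v u p \<Longrightarrow> F \<subseteq> G \<Longrightarrow> is_walk G v u p"
  by (auto simp: is_walk_def)

lemma is_walk_rev: "is_walk F v u p \<Longrightarrow> is_walk F u v (rev p)"
  by (auto simp: is_walk_def hd_rev last_rev)

lemma path_length_nonneg: "\<forall>e\<in>path_edges p. 0 \<le> c e \<Longrightarrow> 0 \<le> path_length c p"
  by (induction p rule: induct_list012) auto

lemma
  assumes "p \<noteq> []" "q \<noteq> []" "last p = hd q"
  shows path_edges_join: "path_edges (p @ tl q) = path_edges p \<union> path_edges q"
    and path_length_join: "path_length c (p @ tl q) = path_length c p + path_length c q"
proof -
  have p: "butlast p @ [hd q] = p" and q: "hd q # tl q = q"
    using assms by (simp_all add: snoc_eq_iff_butlast)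
  have pq: "p @ tl q = butlast p @ hd q # tl q" by (subst p[symmetric]) simp
  have "path_edges (p @ tl q) = path_edges (butlast p @ [hd q]) \<union> path_edges (hd q # tl q)"
    unfolding pq by (rule path_edges_append)
  then show "path_edges (p @ tl q) = path_edges p \<union> path_edges q" by (simp only: p q)
  have "path_length c (p @ tl q) = path_length c (butlast p @ [hd q]) + path_length c (hd q # tl q)"
    unfolding pq by (rule path_length_append)
  then show "path_length c (p @ tl q) = path_length c p + path_length c q" by (simp only: p q)
qed

lemma last_append_tl: "last p = hd q \<Longrightarrow> q \<noteq> [] \<Longrightarrow> last (p @ tl q) = last q"
  by (cases q) (auto simp: last_append)

lemma is_walk_join: "is_walk F v w p \<Longrightarrow> is_walk F w u q \<Longrightarrow> is_walk F v u (p @ tl q)"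
  unfolding is_walk_def using path_edges_join[of p q] last_append_tl[of p q] by auto

lemma walk_to_path:
  assumes "is_walk F v u p" and "\<forall>e\<in>path_edges p. 0 \<le> c e"
  shows "\<exists>q. is_path F v u q \<and> path_edges q \<subseteq> path_edges p \<and> path_length c q \<le> path_length c p"
  using assms
proof (induction "length p" arbitrary: p rule: less_induct)
  case less
  show ?case
  proof (cases "distinct p")
    case True
    then show ?thesis using less.prems by (auto simp: is_path_iff_walk)
  next
    case False
    then obtain xs y ys zs where p: "p = xs @ y # ys @ y # zs"
      using not_distinct_decomp by fastforce
    let ?p' = "xs @ y # zs" and ?loop = "y # ys @ [y]"
    have edges: "path_edges p = path_edges ?p' \<union> path_edges ?loop"
      using path_edges_append[of xs y "ys @ y # zs"] path_edges_append[of "y # ys" y zs]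
        path_edges_append[of xs y zs] unfolding p by auto
    have "path_length c p = path_length c ?p' + path_length c ?loop"
      using path_length_append[of c xs y "ys @ y # zs"] path_length_append[of c "y # ys" y zs]
        path_length_append[of c xs y zs] unfolding p by simp
    moreover have "0 \<le> path_length c ?loop"
      using less.prems(2) edges by (intro path_length_nonneg) blast
    ultimately have shorter: "path_length c ?p' \<le> path_length c p" by linarith
    have "is_walk F v u ?p'"
      using less.prems(1) edges unfolding p is_walk_def by (cases xs) auto
    moreover have "length ?p' < length p" unfolding p by simp
    ultimately show ?thesis
      using less.hyps[of ?p'] less.prems(2) edges shorter by fastforce
  qed
qed

lemma walk_replace_edges:
  assumes "is_walk F v u p" and "\<And>x y. {x, y} \<in> F \<Longrightarrow> \<exists>q. is_walk G x y q"
  shows "\<exists>q. is_walk G v u q"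
  using assms(1)
proof (induction p arbitrary: v rule: induct_list012)
  case (2 x)
  then show ?case by (auto simp: is_walk_def)
next
  case (3 x y zs)
  then have "{x, y} \<in> F" "x = v" and "is_walk F y u (y # zs)" by (auto simp: is_walk_def)
  then obtain q1 q2 where "is_walk G v y q1" "is_walk G y u q2"
    using 3 assms(2) by blast
  then show ?case by (blast intro: is_walk_join)
qed (simp add: is_walk_def)

lemma walk_path_edges_nonempty: "is_walk F v u p \<Longrightarrow> v \<noteq> u \<Longrightarrow> path_edges p \<noteq> {}"
  using set_eq_insert_hd_Union_path_edges[of p] last_in_set[of p] by (auto simp: is_walk_def)

lemma path_split_interior:
  assumes "is_path F v u p" "w \<in> set p" "w \<noteq> v" "w \<noteq> u"
  obtains p1 p2 where "p = p1 @ w # p2" "p1 \<noteq> []" "p2 \<noteq> []"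
proof -
  obtain p1 p2 where "p = p1 @ w # p2" using split_list assms(2) by metis
  moreover have "p1 \<noteq> []" "p2 \<noteq> []" using assms(1,3,4) calculation by (auto simp: is_path_def)
  ultimately show ?thesis using that by blast
qed

lemma path_edges_split_at:
  "p1 \<noteq> [] \<Longrightarrow> p2 \<noteq> [] \<Longrightarrow>
    path_edges (p1 @ w # p2) = insert {last p1, w} (insert {w, hd p2} (path_edges p1 \<union> path_edges p2))"
  by (auto simp: path_edges_append_nonempty path_edges_Cons)

section \<open>Forests\<close>

lemma hd_last_notin_path_edges:
  assumes "distinct p" "3 \<le> length p"
  shows "{hd p, last p} \<notin> path_edges p"
proof -
  obtain x y zs where p: "p = x # y # zs" and "zs \<noteq> []"
    using assms(2) by (cases p rule: remdups_adj.cases) (auto simp: Suc_le_eq)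
  then have "last p \<in> set zs" by simp
  then show ?thesis using assms(1) p set_eq_insert_hd_Union_path_edges[of "y # zs"]
    by (auto simp: doubleton_eq_iff)
qed

lemma is_forest_iff_bridges:
  "is_forest F \<longleftrightarrow> (\<forall>x y p. {x, y} \<in> F \<longrightarrow> x \<noteq> y \<longrightarrow> \<not> is_walk (F - {{x, y}}) x y p)"
proof
  assume forest: "is_forest F"
  show "\<forall>x y p. {x, y} \<in> F \<longrightarrow> x \<noteq> y \<longrightarrow> \<not> is_walk (F - {{x, y}}) x y p"
  proof (intro allI impI notI)
    fix x y p assume xy: "{x, y} \<in> F" "x \<noteq> y" and "is_walk (F - {{x, y}}) x y p"
    then obtain q where q: "is_path (F - {{x, y}}) x y q"
      using walk_to_path[of _ x y p "\<lambda>_. 0"] by auto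
    then have "distinct q" "path_edges q \<subseteq> F - {{x, y}}" "hd q = x" "last q = y" "q \<noteq> []"
      by (auto simp: is_path_iff_walk is_walk_def)
    moreover have "3 \<le> length q"
    proof (rule ccontr)
      assume "\<not> 3 \<le> length q"
      then show False
        using \<open>q \<noteq> []\<close> \<open>hd q = x\<close> \<open>last q = y\<close> \<open>x \<noteq> y\<close> \<open>path_edges q \<subseteq> F - {{x, y}}\<close>
        by (cases q rule: remdups_adj.cases) (auto simp: Suc_le_eq)
    qed
    ultimately have "is_cycle F q" using xy by (auto simp: is_cycle_iff insert_commute)
    then show False using forest by (auto simp: is_forest_def)
  qed
next
  assume bridges: "\<forall>x y p. {x, y} \<in> F \<longrightarrow> x \<noteq> y \<longrightarrow> \<not> is_walk (F - {{x, y}}) x y p"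
  show "is_forest F" unfolding is_forest_def
  proof
    assume "\<exists>q. is_cycle F q"
    then obtain q where q: "3 \<le> length q" "distinct q" "path_edges q \<subseteq> F" "{last q, hd q} \<in> F"
      by (auto simp: is_cycle_iff)
    then have "hd q \<noteq> last q" by (cases q rule: remdups_adj.cases) auto
    moreover have "is_walk (F - {{hd q, last q}}) (hd q) (last q) q"
      using q hd_last_notin_path_edges[of q] by (auto simp: is_walk_def)
    ultimately show False using bridges q(4) by (metis insert_commute)
  qed
qed

lemma forest_no_bypass:
  "is_forest F \<Longrightarrow> {x, y} \<in> F \<Longrightarrow> x \<noteq> y \<Longrightarrow> \<not> is_walk (F - {{x, y}}) x y p"
  unfolding is_forest_iff_bridges by blast

lemma forest_paths_same_second_vertex:
  assumes forest: "is_forest F" and p: "is_path F v u (v # p)" and q: "is_path F v u (v # q)"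
    and ne: "p \<noteq> []" "q \<noteq> []"
  shows "hd p = hd q"
proof (rule ccontr)
  assume hd_ne: "hd p \<noteq> hd q"
  let ?y = "hd p"
  have v: "v \<notin> set p" "v \<notin> set q" using p q by (auto simp: is_path_def)
  have edge: "{v, ?y} \<in> F" "v \<noteq> ?y"
    using p ne v by (auto simp: is_path_iff_walk is_walk_def path_edges_Cons)
  have q_walk: "is_walk F v u (v # q)" using q by (simp add: is_path_iff_walk)
  have "is_walk F ?y u p" using p ne by (auto simp: is_path_iff_walk is_walk_def path_edges_Cons)
  then have rev_walk: "is_walk F u ?y (rev p)" by (rule is_walk_rev)
  with q_walk have walk: "is_walk F v ?y ((v # q) @ tl (rev p))" by (rule is_walk_join)
  have "path_edges ((v # q) @ tl (rev p)) = insert {v, hd q} (path_edges q) \<union> path_edges p"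
    using path_edges_join[of "v # q" "rev p"] q_walk rev_walk ne(2)
    by (simp add: is_walk_def path_edges_Cons)
  then have "{v, ?y} \<notin> path_edges ((v # q) @ tl (rev p))"
    using v hd_ne path_edge_subset_set[of "{v, ?y}"] by (auto simp: doubleton_eq_iff)
  with walk have "is_walk (F - {{v, ?y}}) v ?y ((v # q) @ tl (rev p))"
    by (auto simp: is_walk_def)
  then show False using forest_no_bypass[OF forest edge] by blast
qed

lemma forest_path_unique:
  assumes "is_forest F" "is_path F v u p" "is_path F v u q"
  shows "p = q"
  using assms(2,3)
proof (induction p arbitrary: v q)
  case Nil
  then show ?case by (simp add: is_path_def)
next
  case (Cons x p')
  obtain q' where q: "q = v # q'" and x: "x = v"
    using Cons.prems by (cases q) (auto simp: is_path_def)
  show ?case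
  proof (cases "p' = [] \<or> q' = []")
    case True
    then have "u = v" using Cons.prems q x by (auto simp: is_path_def)
    then have "p' = [] \<and> q' = []" using Cons.prems q x
      by (auto simp: is_path_iff_walk is_walk_def split: if_splits dest: last_in_set)
    then show ?thesis using q x by simp
  next
    case False
    then have "hd p' = hd q'"
      using forest_paths_same_second_vertex[OF assms(1)] Cons.prems q x by blast
    moreover have "is_path F (hd p') u p'" "is_path F (hd q') u q'"
      using Cons.prems q x False by (auto simp: is_path_iff_walk is_walk_def path_edges_Cons)
    ultimately show ?thesis using Cons.IH q x by simp
  qed
qed

lemma is_forest_subset: "is_forest F \<Longrightarrow> G \<subseteq> F \<Longrightarrow> is_forest G"
  unfolding is_forest_def is_cycle_def by blast

definition degree :: "'v set set \<Rightarrow> 'v \<Rightarrow> nat" where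
  "degree F v = card {e \<in> F. v \<in> e}"

lemma finite_Union_if_card_2: "finite F \<Longrightarrow> \<forall>e\<in>F. card e = 2 \<Longrightarrow> finite (\<Union> F)"
  by (metis card.infinite finite_Union zero_neq_numeral)

lemma card_2_other: "card e = 2 \<Longrightarrow> z \<in> e \<Longrightarrow> \<exists>t. t \<noteq> z \<and> e = {z, t}"
  by (auto simp: card_2_iff insert_commute)

lemma sum_degree:
  assumes "finite F" "\<forall>e\<in>F. card e = 2"
  shows "(\<Sum>v\<in>\<Union> F. degree F v) = 2 * card F"
proof -
  have "(\<Sum>v\<in>\<Union> F. degree F v) = (\<Sum>e\<in>F. card {v \<in> \<Union> F. v \<in> e})"
    using sum.swap_restrict[of "\<Union> F" F "\<lambda>_ _. 1::nat" "\<lambda>v e. v \<in> e"]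
      finite_Union_if_card_2[OF assms] assms(1)
    by (simp add: degree_def)
  also have "\<dots> = (\<Sum>e\<in>F. card e)"
    by (intro sum.cong refl arg_cong[where f = card]) blast
  also have "\<dots> = (\<Sum>e\<in>F. 2)"
    using assms(2) by simp
  finally show ?thesis by simp
qed

lemma longest_path_exists:
  assumes fin: "finite F" and two: "\<forall>e\<in>F. card e = 2" and "F \<noteq> {}"
  obtains p where "is_path F (hd p) (last p) p" "2 \<le> length p"
    and "\<And>q. is_path F (hd q) (last q) q \<Longrightarrow> length q \<le> length p"
proof -
  let ?path = "\<lambda>p. is_path F (hd p) (last p) p"
  obtain x0 y0 where "{x0, y0} \<in> F" "x0 \<noteq> y0" using assms(3) two card_2_iff by (metis ex_in_conv)
  then have path2: "?path [x0, y0]" by (simp add: is_path_iff_walk is_walk_def)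
  moreover have "\<forall>p. ?path p \<longrightarrow> length p < card (\<Union> F) + 2"
  proof (intro allI impI)
    fix p assume p: "?path p"
    then have "set p \<subseteq> insert (hd p) (\<Union> F)" "distinct p"
      using set_eq_insert_hd_Union_path_edges[of p] by (auto simp: is_path_iff_walk is_walk_def)
    then have "length p \<le> card (insert (hd p) (\<Union> F))"
      using finite_Union_if_card_2[OF fin two] by (metis card_mono distinct_card finite_insert)
    also have "\<dots> \<le> card (\<Union> F) + 1" by (simp add: card_insert_le_m1 card_insert_if)
    finally show "length p < card (\<Union> F) + 2" by simp
  qed
  ultimately obtain p where p: "?path p" and longest: "\<And>q. ?path q \<Longrightarrow> length q \<le> length p"
    using ex_has_greatest_nat[of ?path "[x0, y0]" length] by blast
  moreover have "2 \<le> length p" using longest[OF path2] by simp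
  ultimately show ?thesis using that by blast
qed

lemma longest_path_end_neighbour:
  assumes forest: "is_forest F" and p: "is_path F (hd p) (last p) p" "p = p0 @ [y, z]"
    and longest: "\<And>q. is_path F (hd q) (last q) q \<Longrightarrow> length q \<le> length p"
    and t: "{z, t} \<in> F" "t \<noteq> z"
  shows "t = y"
proof (rule ccontr)
  assume "t \<noteq> y"
  have dist: "distinct p" and pF: "path_edges p \<subseteq> F"
    using p(1) by (auto simp: is_path_iff_walk is_walk_def)
  consider "t \<notin> set p" | a1 a2 where "p0 = a1 @ t # a2"
    using t(2) \<open>t \<noteq> y\<close> unfolding p(2) by (auto dest: split_list)
  then show False
  proof cases
    case 1
    have "is_path F (hd (p @ [t])) (last (p @ [t])) (p @ [t])"
      using p t 1 path_edges_append_nonempty[of p "[t]"]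
      by (auto simp: is_path_iff_walk is_walk_def)
    then show False using longest[of "p @ [t]"] by simp
  next
    case 2
    let ?q = "t # a2 @ [y, z]"
    have "path_edges ?q \<subseteq> F"
      using pF path_edges_append[of a1 t "a2 @ [y, z]"] unfolding p(2) 2 by auto
    moreover have "distinct ?q" "3 \<le> length ?q" using dist unfolding p(2) 2 by auto
    ultimately have "is_walk (F - {{t, z}}) t z ?q"
      using hd_last_notin_path_edges[of ?q] by (auto simp: is_walk_def)
    then show False using forest_no_bypass[OF forest _ t(2)] t(1) by (simp add: insert_commute)
  qed
qed

lemma forest_has_leaf:
  assumes fin: "finite F" and forest: "is_forest F" and two: "\<forall>e\<in>F. card e = 2" and "F \<noteq> {}"
  obtains y z where "{e \<in> F. z \<in> e} = {{y, z}}"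
proof -
  obtain p where p: "is_path F (hd p) (last p) p" "2 \<le> length p"
    and longest: "\<And>q. is_path F (hd q) (last q) q \<Longrightarrow> length q \<le> length p"
    using longest_path_exists[OF fin two assms(4)] by blast
  then obtain p0 y z where p0: "p = p0 @ [y, z]"
  proof (cases "rev p" rule: remdups_adj.cases)
    case (3 z y r)
    then show ?thesis using that[of "rev r" y z] by (simp add: rev_swap)
  qed auto
  have "{y, z} \<in> F"
    using p(1) path_edges_append[of p0 y "[z]"] unfolding p0 by (auto simp: is_path_iff_walk is_walk_def)
  moreover have "e \<in> {{y, z}}" if e: "e \<in> F" "z \<in> e" for e
  proof -
    obtain t where t: "t \<noteq> z" "e = {z, t}" using e two card_2_other[of e z] by auto
    then have "t = y" using longest_path_end_neighbour[OF forest p(1) p0 longest] e by simp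
    then show ?thesis using t by (simp add: insert_commute)
  qed
  ultimately have "{e \<in> F. z \<in> e} = {{y, z}}" by blast
  then show ?thesis ..
qed

lemma forest_card_less_card_vertices:
  assumes "finite F" "is_forest F" "\<forall>e\<in>F. card e = 2" "F \<noteq> {}"
  shows "card F < card (\<Union> F)"
  using assms
proof (induction "card F" arbitrary: F rule: less_induct)
  case less
  obtain y z where leaf: "{e \<in> F. z \<in> e} = {{y, z}}"
    using forest_has_leaf[OF less.prems] .
  let ?F = "F - {{y, z}}"
  have yz: "{y, z} \<in> F" using leaf by (metis (no_types, lifting) mem_Collect_eq singletonI)
  have z: "z \<in> \<Union> F" using yz by blast
  have fin_U: "finite (\<Union> F)" using finite_Union_if_card_2 less.prems(1,3) by blast
  have card_F: "card F = Suc (card ?F)" using card_Suc_Diff1[OF less.prems(1) yz] by simp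
  show ?case
  proof (cases "?F = {}")
    case True
    then have "F = {{y, z}}" using yz by blast
    then show ?thesis using less.prems(3) by (cases "y = z") auto
  next
    case False
    have "card ?F < card (\<Union> ?F)"
      using less.hyps[of ?F] less.prems False card_F is_forest_subset[of F ?F] by auto
    also have "\<dots> \<le> card (\<Union> F - {z})"
      using leaf fin_U by (intro card_mono) auto
    also have "\<dots> = card (\<Union> F) - 1" using z fin_U by (simp add: card_Diff_singleton)
    finally show ?thesis using card_F by linarith
  qed
qed

lemma card_nonterminals_le:
  assumes fin: "finite F" and "is_forest F" and two: "\<forall>e\<in>F. card e = 2" and "F \<noteq> {}"
    and deg3: "\<forall>v\<in>\<Union> F - T. 3 \<le> degree F v"
  shows "card (\<Union> F - T) + 2 \<le> card (\<Union> F \<inter> T)"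
proof -
  let ?N = "\<Union> F - T" and ?M = "\<Union> F \<inter> T"
  have fin_U: "finite (\<Union> F)" using finite_Union_if_card_2 fin two by blast
  have U: "\<Union> F = ?N \<union> ?M" "?N \<inter> ?M = {}" by blast+
  have deg1: "1 \<le> degree F v" if "v \<in> \<Union> F" for v
    using that fin by (auto simp: degree_def Suc_le_eq card_gt_0_iff)
  have "3 * card ?N + card ?M = (\<Sum>v\<in>?N. 3) + (\<Sum>v\<in>?M. 1)" by simp
  also have "\<dots> \<le> (\<Sum>v\<in>?N. degree F v) + (\<Sum>v\<in>?M. degree F v)"
    using deg3 deg1 by (intro add_mono sum_mono) auto
  also have "\<dots> = (\<Sum>v\<in>\<Union> F. degree F v)"
    using fin_U by (subst U(1), intro sum.union_disjoint[symmetric]) auto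
  also have "\<dots> = 2 * card F" using sum_degree[OF fin two] .
  finally have "3 * card ?N + card ?M \<le> 2 * card F" .
  moreover have "card F < card ?N + card ?M"
    using forest_card_less_card_vertices[OF assms(1-4)] fin_U U card_Un_disjoint by (metis finite_Un)
  ultimately show ?thesis by linarith
qed

section \<open>Edge schedules\<close>

definition completion_time :: "('e \<Rightarrow> real) \<Rightarrow> 'e list \<Rightarrow> 'e \<Rightarrow> real" where
  "completion_time c es e = sum_list (map c (takeWhile (\<lambda>x. x \<noteq> e) es)) + c e"

lemma completion_time_nth:
  assumes "distinct es" "k < length es"
  shows "completion_time c es (es ! k) = sum_list (map c (take (Suc k) es))"
proof -
  have "takeWhile (\<lambda>x. x \<noteq> es ! k) es = take k es"
    using assms by (intro takeWhile_eq_take_P_nth) (auto simp: nth_eq_iff_index_eq)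
  then show ?thesis using assms(2) by (simp add: completion_time_def take_Suc_conv_app_nth)
qed

lemma conn_time_eq_Max:
  assumes "distinct es"
  shows "conn_time c F es (v, u) =
    Max (completion_time c es ` (path_edges (SOME p. is_path F v u p) \<inter> set es))"
proof -
  let ?P = "path_edges (SOME p. is_path F v u p)"
  have "{sum_list (map c (take (Suc k) es)) | k. k < length es \<and> es ! k \<in> ?P}
      = (\<lambda>k. completion_time c es (es ! k)) ` {k. k < length es \<and> es ! k \<in> ?P}"
    using completion_time_nth[OF assms] by auto
  also have "\<dots> = completion_time c es ` (?P \<inter> set es)"
    by (force simp: in_set_conv_nth image_iff)
  finally show ?thesis unfolding conn_time_def by simp
qed

lemma Max_le_Max_if_dominated:
  fixes A B :: "'a :: linorder set"
  assumes "finite A" "finite B" "A \<noteq> {}" "\<forall>x\<in>A. \<exists>y\<in>B. x \<le> y"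
  shows "Max A \<le> Max B"
proof (subst Max_le_iff[OF assms(1,3)], intro ballI)
  fix x assume "x \<in> A"
  then obtain y where "y \<in> B" "x \<le> y" using assms(4) by blast
  then show "x \<le> Max B" using assms(2) by (meson Max_ge order.trans)
qed

lemma
  assumes "finite F"
  shows F_val_le: "distinct es \<Longrightarrow> set es = F \<Longrightarrow> F_val c R \<Phi> F \<le> \<Phi> (map (conn_time c F es) R)"
    and F_val_attained: "\<exists>es. distinct es \<and> set es = F \<and> F_val c R \<Phi> F = \<Phi> (map (conn_time c F es) R)"
proof -
  let ?S = "{\<Phi> (map (conn_time c F es) R) | es. distinct es \<and> set es = F}"
  have "?S \<subseteq> (\<lambda>es. \<Phi> (map (conn_time c F es) R)) ` {es. set es \<subseteq> F \<and> distinct es}" by blast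
  then have "finite ?S" using finite_subset_distinct[OF assms] finite_surj by blast
  moreover have "?S \<noteq> {}" using finite_distinct_list[OF assms] by blast
  ultimately show "distinct es \<Longrightarrow> set es = F \<Longrightarrow> F_val c R \<Phi> F \<le> \<Phi> (map (conn_time c F es) R)"
    and "\<exists>es. distinct es \<and> set es = F \<and> F_val c R \<Phi> F = \<Phi> (map (conn_time c F es) R)"
    unfolding F_val_def using Min_in[of ?S] by (blast intro: Min_le)+
qed

lemma F_val_le_if_conn_time_le:
  assumes "finite F'" "distinct es'" "set es' = F'"
    and mono: "\<forall>ts ts'. length ts = length R \<longrightarrow> list_all2 (\<le>) ts ts' \<longrightarrow> \<Phi> ts \<le> \<Phi> ts'"
    and le: "\<And>vu. vu \<in> set R \<Longrightarrow> conn_time c' F' es' vu \<le> conn_time c F es vu"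
  shows "F_val c' R \<Phi> F' \<le> \<Phi> (map (conn_time c F es) R)"
proof -
  have "list_all2 (\<le>) (map (conn_time c' F' es') R) (map (conn_time c F es) R)"
    using le by (simp add: list_all2_map1 list_all2_map2 list_all2_same)
  then show ?thesis using F_val_le[OF assms(1-3)] mono by (metis length_map order.trans)
qed

lemma F_val_mono_lengths:
  assumes "finite F" and le: "\<forall>e\<in>F. c1 e \<le> c2 e"
    and mono: "\<forall>ts ts'. length ts = length R \<longrightarrow> list_all2 (\<le>) ts ts' \<longrightarrow> \<Phi> ts \<le> \<Phi> ts'"
  shows "F_val c1 R \<Phi> F \<le> F_val c2 R \<Phi> F"
proof -
  obtain es where es: "distinct es" "set es = F" "F_val c2 R \<Phi> F = \<Phi> (map (conn_time c2 F es) R)"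
    using F_val_attained[OF assms(1)] by blast
  have "completion_time c1 es e \<le> completion_time c2 es e" if "e \<in> F" for e
  proof -
    have "\<forall>x\<in>set (takeWhile (\<lambda>x. x \<noteq> e) es). c1 x \<le> c2 x"
      using le es(2) by (auto dest: set_takeWhileD)
    then show ?thesis using le that unfolding completion_time_def
      by (metis add_mono sum_list_mono)
  qed
  then have "conn_time c1 F es (v, u) \<le> conn_time c2 F es (v, u)" for v u
    unfolding conn_time_eq_Max[OF es(1)] es(2)
    by (cases "path_edges (SOME p. is_path F v u p) \<inter> F = {}")
      (simp, rule Max_le_Max_if_dominated, auto)
  then show ?thesis using F_val_le_if_conn_time_le[OF assms(1) es(1,2) mono] es(3) by force
qed

lemma sum_list_takeWhile_remove1_le:
  fixes c :: "'e \<Rightarrow> real"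
  assumes "P y" "\<forall>x\<in>set xs. 0 \<le> c x"
  shows "sum_list (map c (takeWhile P (remove1 y xs))) \<le> sum_list (map c (takeWhile P xs))"
  using assms by (induction xs) auto

lemma split_list_two:
  assumes "e1 \<in> set es" "e2 \<in> set es" "e1 \<noteq> e2"
  obtains xs l ys k where "es = xs @ l # ys" "k \<in> set xs" "{k, l} = {e1, e2}"
proof -
  obtain xs1 ys1 where es1: "es = xs1 @ e1 # ys1" using assms(1) by (metis split_list)
  show ?thesis
  proof (cases "e2 \<in> set xs1")
    case True
    then show ?thesis using that[OF es1] by (simp add: insert_commute)
  next
    case False
    then have "e2 \<in> set ys1" using assms(2,3) es1 by simp
    then obtain xs2 ys2 where "ys1 = xs2 @ e2 # ys2" by (metis split_list)
    then show ?thesis using that[of "xs1 @ e1 # xs2" e2 ys2 e1] es1 by simp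
  qed
qed

lemma completion_time_merge_into_later:
  fixes c :: "'e \<Rightarrow> real"
  assumes dist: "distinct (xs @ l # ys)" and k: "k \<in> set xs" and f: "f \<notin> set (xs @ l # ys)"
    and nonneg: "\<forall>x\<in>set xs. 0 \<le> c x" and f_le: "c f \<le> c k + c l"
  shows "completion_time c (remove1 k xs @ f # ys) f \<le> completion_time c (xs @ l # ys) l"
    and "e \<in> set xs \<union> set ys - {k} \<Longrightarrow>
      completion_time c (remove1 k xs @ f # ys) e \<le> completion_time c (xs @ l # ys) e"
proof -
  have set_remove: "set (remove1 k xs) = set xs - {k}" using dist by simp
  \<comment> \<open>Dropping \<open>k\<close> moves every later job forward by \<open>c k\<close>, which pays for replacing \<open>l\<close> by \<open>f\<close>.\<close>
  have sum_xs: "sum_list (map c xs) = c k + sum_list (map c (remove1 k xs))"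
    using k by (rule sum_list_map_remove1)
  have "takeWhile (\<lambda>x. x \<noteq> f) (remove1 k xs @ f # ys) = remove1 k xs"
    using f by (subst takeWhile_append2) (auto simp: set_remove)
  moreover have "takeWhile (\<lambda>x. x \<noteq> l) (xs @ l # ys) = xs"
    using dist by (subst takeWhile_append2) auto
  ultimately show "completion_time c (remove1 k xs @ f # ys) f \<le> completion_time c (xs @ l # ys) l"
    unfolding completion_time_def using sum_xs f_le by simp
  assume e: "e \<in> set xs \<union> set ys - {k}"
  show "completion_time c (remove1 k xs @ f # ys) e \<le> completion_time c (xs @ l # ys) e"
  proof (cases "e \<in> set xs")
    case True
    then have "e \<in> set (remove1 k xs)" using e set_remove by simp
    then have "takeWhile (\<lambda>x. x \<noteq> e) (remove1 k xs @ f # ys) = takeWhile (\<lambda>x. x \<noteq> e) (remove1 k xs)"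
      by (rule takeWhile_append1) simp
    moreover have "takeWhile (\<lambda>x. x \<noteq> e) (xs @ l # ys) = takeWhile (\<lambda>x. x \<noteq> e) xs"
      using True by (rule takeWhile_append1) simp
    moreover have "sum_list (map c (takeWhile (\<lambda>x. x \<noteq> e) (remove1 k xs)))
        \<le> sum_list (map c (takeWhile (\<lambda>x. x \<noteq> e) xs))"
      using e nonneg by (intro sum_list_takeWhile_remove1_le) auto
    ultimately show ?thesis unfolding completion_time_def by simp
  next
    case False
    then have "e \<in> set ys" "e \<noteq> l" using e dist by auto
    then have "takeWhile (\<lambda>x. x \<noteq> e) (remove1 k xs @ f # ys) = remove1 k xs @ f # takeWhile (\<lambda>x. x \<noteq> e) ys"
      and "takeWhile (\<lambda>x. x \<noteq> e) (xs @ l # ys) = xs @ l # takeWhile (\<lambda>x. x \<noteq> e) ys"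
      using dist f by (subst takeWhile_append2, auto simp: set_remove)+
    then show ?thesis using sum_xs f_le unfolding completion_time_def by simp
  qed
qed

lemma reorder_merging_two_jobs:
  fixes c :: "'e \<Rightarrow> real"
  assumes es: "distinct es" "e1 \<in> set es" "e2 \<in> set es" "e1 \<noteq> e2" "f \<notin> set es"
    and nonneg: "\<forall>e\<in>set es. 0 \<le> c e" and f_le: "c f \<le> c e1 + c e2"
  obtains es' where "distinct es'" "set es' = insert f (set es - {e1, e2})"
    and "completion_time c es' f \<le> max (completion_time c es e1) (completion_time c es e2)"
    and "\<And>e. e \<in> set es - {e1, e2} \<Longrightarrow> completion_time c es' e \<le> completion_time c es e"
proof -
  obtain xs l ys k where split: "es = xs @ l # ys" "k \<in> set xs" and kl: "{k, l} = {e1, e2}"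
    using split_list_two[OF es(2-4)] .
  let ?es' = "remove1 k xs @ f # ys"
  have "distinct ?es'" "set ?es' = insert f (set es - {e1, e2})"
    using es(1,5) split kl by (auto simp: doubleton_eq_iff)
  moreover have merge: "c f \<le> c k + c l" using f_le kl by (auto simp: doubleton_eq_iff)
  have "completion_time c ?es' f \<le> completion_time c es l"
    using completion_time_merge_into_later(1)[OF _ split(2) _ _ merge] es(1,5) nonneg split(1)
    by simp
  then have "completion_time c ?es' f \<le> max (completion_time c es e1) (completion_time c es e2)"
    using kl by (auto simp: doubleton_eq_iff)
  moreover have "completion_time c ?es' e \<le> completion_time c es e" if "e \<in> set es - {e1, e2}" for e
    using completion_time_merge_into_later(2)[OF _ split(2) _ _ merge, of ys e] that es(1,5) nonneg
      split(1) kl by auto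
  ultimately show ?thesis using that by blast
qed

section \<open>Short-cutting a non-terminal vertex of degree two\<close>

definition shortcut :: "'v set set \<Rightarrow> 'v \<Rightarrow> 'v \<Rightarrow> 'v \<Rightarrow> 'v set set" where
  "shortcut F a w b = insert {a, b} (F - {{a, w}, {w, b}})"

lemma pair_in_terminals: "(v, u) \<in> set R \<Longrightarrow> v \<in> terminals R \<and> u \<in> terminals R"
  unfolding terminals_def by force

locale degree_two_vertex =
  fixes F :: "'v set set" and a w b :: 'v
  assumes forest: "is_forest F"
    and edges_at_w: "{e \<in> F. w \<in> e} = {{a, w}, {w, b}}"
    and distinct: "a \<noteq> b" "a \<noteq> w" "b \<noteq> w"
begin

lemma aw_in: "{a, w} \<in> F" and wb_in: "{w, b} \<in> F"
  using edges_at_w by blast+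

lemma aw_neq_wb: "{a, w} \<noteq> {w, b}"
  using distinct by (auto simp: doubleton_eq_iff)

lemma ab_notin: "{a, b} \<notin> F"
proof
  assume "{a, b} \<in> F"
  moreover have "is_walk (F - {{a, b}}) a b [a, w, b]"
    using aw_in wb_in distinct by (auto simp: is_walk_def doubleton_eq_iff)
  ultimately show False using forest_no_bypass[OF forest] distinct by blast
qed

lemma edge_at_w: "e \<in> F \<Longrightarrow> w \<in> e \<Longrightarrow> e = {a, w} \<or> e = {w, b}"
  using edges_at_w by blast

lemma path_through_w:
  assumes p: "is_path F v u (p1 @ w # p2)" and ne: "p1 \<noteq> []" "p2 \<noteq> []"
  shows "{last p1, hd p2} = {a, b}" and "{{last p1, w}, {w, hd p2}} = {{a, w}, {w, b}}"
proof -
  let ?x = "last p1" and ?y = "hd p2"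
  have "?x \<in> set p1" "?y \<in> set p2" using ne by simp_all
  moreover have "distinct (p1 @ w # p2)" using p by (simp add: is_path_def)
  ultimately have xyw: "?x \<noteq> ?y" "?x \<noteq> w" "?y \<noteq> w" by auto
  have "{?x, w} \<in> F" "{w, ?y} \<in> F"
    using p ne by (auto simp: is_path_iff_walk is_walk_def path_edges_split_at)
  then have "{?x, w} = {a, w} \<or> {?x, w} = {w, b}" "{w, ?y} = {a, w} \<or> {w, ?y} = {w, b}"
    using edge_at_w by auto
  with xyw distinct show "{?x, ?y} = {a, b}" and "{{?x, w}, {w, ?y}} = {{a, w}, {w, b}}"
    by (auto simp: doubleton_eq_iff)
qed

lemma shortcut_path:
  assumes p: "is_path F v u p" and w: "w \<noteq> v" "w \<noteq> u"
  obtains p' where "is_path (shortcut F a w b) v u p'"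
    and "path_edges p' - {{a, b}} = path_edges p - {{a, w}, {w, b}}"
    and "{a, b} \<in> path_edges p' \<longleftrightarrow> w \<in> set p"
    and "w \<in> set p \<Longrightarrow> {{a, w}, {w, b}} \<subseteq> path_edges p"
proof (cases "w \<in> set p")
  case False
  have "path_edges p \<subseteq> F" using p by (simp add: is_path_iff_walk is_walk_def)
  moreover have "w \<notin> \<Union> (path_edges p)" using False path_edge_subset_set by blast
  ultimately have "path_edges p \<subseteq> F - {{a, w}, {w, b}}" "{a, b} \<notin> path_edges p"
    using ab_notin by auto
  then show ?thesis
    using that[of p] p False by (auto simp: shortcut_def is_path_iff_walk is_walk_def)
next
  case True
  obtain p1 p2 where p12: "p = p1 @ w # p2" "p1 \<noteq> []" "p2 \<noteq> []"
    using path_split_interior[OF p True w] .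
  let ?rest = "path_edges p1 \<union> path_edges p2"
  have dist: "distinct p" and pF: "path_edges p \<subseteq> F" and ends: "hd p = v" "last p = u"
    using p by (auto simp: is_path_iff_walk is_walk_def)
  have "w \<notin> set p1" "w \<notin> set p2" using dist p12 by auto
  then have w_notin: "w \<notin> \<Union> ?rest" by (auto dest: path_edge_subset_set)
  have edges_p: "path_edges p = {{a, w}, {w, b}} \<union> ?rest"
    using p12 path_through_w(2)[of v u p1 p2] p
    by (simp add: path_edges_split_at) (metis insert_is_Un sup_assoc)
  have rest: "?rest \<subseteq> F - {{a, w}, {w, b}, {a, b}}"
    using pF edges_p w_notin ab_notin by blast
  define p' where "p' = p1 @ p2"
  have edges_p': "path_edges p' = insert {a, b} ?rest"
    unfolding p'_def using p12 path_through_w(1)[of v u p1 p2] p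
    by (simp add: path_edges_append_nonempty)
  have "is_path (shortcut F a w b) v u p'"
    using dist ends p12 edges_p' rest unfolding p'_def
    by (auto simp: is_path_iff_walk is_walk_def shortcut_def)
  moreover have "{a, w} \<notin> ?rest" "{w, b} \<notin> ?rest" "{a, b} \<notin> ?rest"
    using rest by auto
  ultimately show ?thesis using that True edges_p edges_p' by (simp add: Un_Diff)
qed

lemma shortcut_forest: "is_forest (shortcut F a w b)"
  unfolding is_forest_iff_bridges
proof (intro allI impI notI)
  fix x y q
  assume xy: "{x, y} \<in> shortcut F a w b" "x \<noteq> y"
    and q: "is_walk (shortcut F a w b - {{x, y}}) x y q"
  show False
  proof (cases "{x, y} = {a, b}")
    case True
    have "shortcut F a w b - {{x, y}} = F - {{a, w}, {w, b}}"
      using True ab_notin by (auto simp: shortcut_def)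
    then obtain q' where "is_walk (F - {{a, w}, {w, b}}) a b q'"
      using q True is_walk_rev by (fastforce simp: doubleton_eq_iff)
    then have "is_walk (F - {{a, w}}) a b q'" by (rule is_walk_mono) blast
    moreover have "is_walk (F - {{a, w}}) b w [b, w]"
      using wb_in aw_neq_wb by (simp add: is_walk_def insert_commute)
    ultimately have "is_walk (F - {{a, w}}) a w (q' @ tl [b, w])"
      by (rule is_walk_join)
    then show False using forest_no_bypass[OF forest aw_in] distinct by blast
  next
    case False
    then have xyF: "{x, y} \<in> F" "{x, y} \<noteq> {a, w}" "{x, y} \<noteq> {w, b}"
      using xy by (auto simp: shortcut_def)
    have "\<exists>r. is_walk (F - {{x, y}}) s t r" if st: "{s, t} \<in> shortcut F a w b - {{x, y}}" for s t
    proof (cases "{s, t} = {a, b}")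
      case True
      then have "is_walk (F - {{x, y}}) s t [s, w, t]"
        using aw_in wb_in xyF by (auto simp: is_walk_def doubleton_eq_iff insert_commute)
      then show ?thesis ..
    next
      case False
      then have "is_walk (F - {{x, y}}) s t [s, t]" using st by (auto simp: is_walk_def shortcut_def)
      then show ?thesis ..
    qed
    then obtain r where "is_walk (F - {{x, y}}) x y r" using walk_replace_edges[OF q] by blast
    then show False using forest_no_bypass[OF forest xyF(1) xy(2)] by blast
  qed
qed

lemma card_shortcut: "finite F \<Longrightarrow> card (shortcut F a w b) < card F"
proof -
  assume "finite F"
  moreover have "{{a, w}, {w, b}} \<subseteq> F" "card {{a, w}, {w, b}} = 2"
    using aw_in wb_in aw_neq_wb by auto
  ultimately have "card (F - {{a, w}, {w, b}}) + 2 = card F"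
    by (metis card_Diff_subset card_mono finite.emptyI finite_insert le_add_diff_inverse2)
  then show ?thesis using \<open>finite F\<close> by (simp add: shortcut_def card_insert_if)
qed

lemma shortcut_r_forest:
  assumes rf: "r_forest E' R F" and w: "w \<notin> terminals R" and ab: "{a, b} \<in> E'"
  shows "r_forest E' R (shortcut F a w b)"
proof -
  have short: "\<exists>p'. is_path (shortcut F a w b) v u p' \<and>
      path_edges p' - {{a, b}} = path_edges p - {{a, w}, {w, b}} \<and>
      ({a, b} \<in> path_edges p' \<longleftrightarrow> w \<in> set p)"
    if "(v, u) \<in> set R" "is_path F v u p" for v u p
    using shortcut_path[OF that(2)] pair_in_terminals[OF that(1)] w by metis
  have "shortcut F a w b \<subseteq> E'" using rf ab by (auto simp: r_forest_def shortcut_def)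
  moreover have "\<forall>(v, u)\<in>set R. \<exists>p. is_path (shortcut F a w b) v u p"
    using rf short by (fastforce simp: r_forest_def)
  moreover have "\<exists>(v, u)\<in>set R. \<exists>p. is_path (shortcut F a w b) v u p \<and> e \<in> path_edges p"
    if e: "e \<in> shortcut F a w b" for e
  proof (cases "e = {a, b}")
    case True
    obtain v u p where vu: "(v, u) \<in> set R" "is_path F v u p" and "{a, w} \<in> path_edges p"
      using rf aw_in unfolding r_forest_def by blast
    then have "w \<in> set p" by (auto dest: path_edge_subset_set)
    then obtain p' where "is_path (shortcut F a w b) v u p'" "{a, b} \<in> path_edges p'"
      using short[OF vu] by blast
    then show ?thesis using vu(1) True by blast
  next
    case False
    then have "e \<in> F - {{a, w}, {w, b}}" using e by (auto simp: shortcut_def)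
    moreover obtain v u p where vu: "(v, u) \<in> set R" "is_path F v u p" and "e \<in> path_edges p"
      using rf calculation unfolding r_forest_def by blast
    ultimately obtain p' where "is_path (shortcut F a w b) v u p'" "e \<in> path_edges p'"
      using short[OF vu] by blast
    then show ?thesis using vu(1) by blast
  qed
  ultimately show ?thesis using shortcut_forest by (auto simp: r_forest_def)
qed

lemma conn_time_shortcut_le:
  fixes l :: "'v set \<Rightarrow> real"
  assumes es: "distinct es" "set es = F" and es': "distinct es'" "set es' = shortcut F a w b"
    and ab_time: "completion_time l es' {a, b}
        \<le> max (completion_time l es {a, w}) (completion_time l es {w, b})"
    and other_time: "\<And>e. e \<in> F - {{a, w}, {w, b}} \<Longrightarrow> completion_time l es' e \<le> completion_time l es e"
    and vu: "\<exists>p. is_path F v u p" "v \<noteq> u" "w \<noteq> v" "w \<noteq> u"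
  shows "conn_time l (shortcut F a w b) es' (v, u) \<le> conn_time l F es (v, u)"
proof -
  define p where "p = (SOME p. is_path F v u p)"
  have p: "is_path F v u p" unfolding p_def using vu(1) by (rule someI_ex)
  obtain p' where p': "is_path (shortcut F a w b) v u p'"
    and edges': "path_edges p' - {{a, b}} = path_edges p - {{a, w}, {w, b}}"
    and ab: "{a, b} \<in> path_edges p' \<longleftrightarrow> w \<in> set p"
    and through_w: "w \<in> set p \<Longrightarrow> {{a, w}, {w, b}} \<subseteq> path_edges p"
    using shortcut_path[OF p vu(3,4)] by metis
  have some_p': "(SOME p. is_path (shortcut F a w b) v u p) = p'"
    using forest_path_unique[OF shortcut_forest _ p'] p' by blast
  have "path_edges p' \<subseteq> shortcut F a w b" using p' by (simp add: is_path_iff_walk is_walk_def)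
  then have "conn_time l (shortcut F a w b) es' (v, u) = Max (completion_time l es' ` path_edges p')"
    unfolding conn_time_eq_Max[OF es'(1)] es'(2) some_p' by (simp add: Int_absorb2)
  also have "\<dots> \<le> Max (completion_time l es ` path_edges p)"
  proof (rule Max_le_Max_if_dominated)
    show "completion_time l es' ` path_edges p' \<noteq> {}"
      using p' vu(2) walk_path_edges_nonempty by (fastforce simp: is_path_iff_walk)
    have "\<exists>e'\<in>path_edges p. completion_time l es' e \<le> completion_time l es e'"
      if e: "e \<in> path_edges p'" for e
    proof (cases "e = {a, b}")
      case True
      then show ?thesis using ab_time ab through_w e by (auto simp: max_def split: if_splits)
    next
      case False
      then have "e \<in> path_edges p - {{a, w}, {w, b}}" using e edges' by blast
      moreover have "path_edges p \<subseteq> F" using p by (simp add: is_path_iff_walk is_walk_def)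
      ultimately show ?thesis using other_time by blast
    qed
    then show "\<forall>x\<in>completion_time l es' ` path_edges p'.
        \<exists>y\<in>completion_time l es ` path_edges p. x \<le> y" by blast
  qed simp_all
  also have "\<dots> = conn_time l F es (v, u)"
    using p unfolding conn_time_eq_Max[OF es(1)] es(2) p_def[symmetric]
    by (simp add: Int_absorb2 is_path_iff_walk is_walk_def)
  finally show ?thesis .
qed

lemma F_val_shortcut:
  fixes l :: "'v set \<Rightarrow> real"
  assumes rf: "r_forest E' R F" and fin: "finite F" and w: "w \<notin> terminals R"
    and pairs: "\<forall>(v, u)\<in>set R. v \<noteq> u"
    and nonneg: "\<forall>e\<in>F. 0 \<le> l e" and tri: "l {a, b} \<le> l {a, w} + l {w, b}"
    and mono: "\<forall>ts ts'. length ts = length R \<longrightarrow> list_all2 (\<le>) ts ts' \<longrightarrow> \<Phi> ts \<le> \<Phi> ts'"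
  shows "F_val l R \<Phi> (shortcut F a w b) \<le> F_val l R \<Phi> F"
proof -
  obtain es where es: "distinct es" "set es = F" "F_val l R \<Phi> F = \<Phi> (map (conn_time l F es) R)"
    using F_val_attained[OF fin] by blast
  obtain es' where es': "distinct es'" "set es' = shortcut F a w b"
    and ab_time: "completion_time l es' {a, b}
        \<le> max (completion_time l es {a, w}) (completion_time l es {w, b})"
    and other_time: "\<And>e. e \<in> F - {{a, w}, {w, b}} \<Longrightarrow> completion_time l es' e \<le> completion_time l es e"
    using reorder_merging_two_jobs[of es "{a, w}" "{w, b}" "{a, b}" l] es(1,2) aw_in wb_in aw_neq_wb
      ab_notin nonneg tri unfolding shortcut_def by metis
  have "conn_time l (shortcut F a w b) es' vu \<le> conn_time l F es vu" if vu: "vu \<in> set R" for vu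
  proof (cases vu)
    case (Pair v u)
    have "\<exists>p. is_path F v u p" using rf vu Pair by (auto simp: r_forest_def)
    moreover have "v \<noteq> u" using pairs vu Pair by auto
    moreover have "w \<noteq> v" "w \<noteq> u" using w pair_in_terminals[of v u R] vu Pair by auto
    ultimately show ?thesis
      using conn_time_shortcut_le[OF es(1,2) es' ab_time other_time] Pair by blast
  qed
  then show ?thesis
    using F_val_le_if_conn_time_le[OF _ es' mono] fin es(3) by (force simp: shortcut_def)
qed

end

section \<open>The metric closure\<close>

lemma finite_closure_edges: "finite V \<Longrightarrow> finite (closure_edges V)"
  unfolding closure_edges_def by (rule finite_subset[of _ "Pow V"]) auto

lemma card_closure_edge: "e \<in> closure_edges V \<Longrightarrow> card e = 2"
  unfolding closure_edges_def by auto

lemma network_walk_in_V: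
  assumes "network V E c" "is_walk E v u p" "v \<in> V"
  shows "set p \<subseteq> V"
proof -
  have "\<Union> E \<subseteq> V" using assms(1) by (fastforce simp: network_def)
  then show ?thesis
    using assms(2,3) set_eq_insert_hd_Union_path_edges[of p] by (auto simp: is_walk_def)
qed

lemma
  assumes net: "network V E c" and ab: "a \<in> V" "b \<in> V" "a \<noteq> b"
  shows closure_length_attained: "\<exists>p. is_path E a b p \<and> closure_length E c {a, b} = path_length c p"
    and closure_length_le_walk: "is_walk E a b p \<Longrightarrow> closure_length E c {a, b} \<le> path_length c p"
proof -
  let ?D = "{path_length c p | p x y. {a, b} = {x, y} \<and> is_path E x y p}"
  have c_nonneg: "\<forall>e\<in>E. 0 \<le> c e" using net by (auto simp: network_def less_imp_le)
  have "?D \<subseteq> path_length c ` {p. set p \<subseteq> V \<and> distinct p}"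
  proof
    fix d assume "d \<in> ?D"
    then obtain p x y where d: "d = path_length c p" "{a, b} = {x, y}" "is_path E x y p" by blast
    then have "x \<in> V" using ab by (auto simp: doubleton_eq_iff)
    then show "d \<in> path_length c ` {p. set p \<subseteq> V \<and> distinct p}"
      using d network_walk_in_V[OF net] by (auto simp: is_path_iff_walk)
  qed
  moreover have "finite {p. set p \<subseteq> V \<and> distinct p}"
    using net finite_subset_distinct unfolding network_def by blast
  ultimately have fin: "finite ?D" by (rule finite_subset[OF _ finite_imageI])
  show "closure_length E c {a, b} \<le> path_length c p" if p: "is_walk E a b p"
  proof -
    have "\<forall>e\<in>path_edges p. 0 \<le> c e" using p c_nonneg by (auto simp: is_walk_def)
    then obtain q where q: "is_path E a b q" "path_length c q \<le> path_length c p"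
      using walk_to_path[OF p] by blast
    then have "path_length c q \<in> ?D" by blast
    then show ?thesis unfolding closure_length_def using fin q(2) by (meson Min_le order.trans)
  qed
  obtain p0 where "is_path E a b p0" using net ab unfolding network_def by blast
  then have "?D \<noteq> {}" by blast
  with fin have "Min ?D \<in> ?D" by (rule Min_in)
  then obtain p x y where p: "Min ?D = path_length c p" "{a, b} = {x, y}" "is_path E x y p"
    by blast
  then have "is_path E a b p \<or> is_path E a b (rev p)"
    by (auto simp: doubleton_eq_iff is_path_iff_walk dest: is_walk_rev)
  moreover have "closure_length E c {a, b} = path_length c p"
    using p(1) unfolding closure_length_def .
  ultimately show "\<exists>p. is_path E a b p \<and> closure_length E c {a, b} = path_length c p"
    by (metis path_length_rev)
qed

lemma closure_length_nonneg:
  assumes net: "network V E c" and "a \<in> V" "b \<in> V" "a \<noteq> b"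
  shows "0 \<le> closure_length E c {a, b}"
proof -
  obtain p where p: "is_path E a b p" "closure_length E c {a, b} = path_length c p"
    using closure_length_attained[OF assms] by blast
  have "\<forall>e\<in>path_edges p. 0 \<le> c e"
    using p(1) net by (fastforce simp: is_path_iff_walk is_walk_def network_def less_imp_le)
  then show ?thesis using p(2) path_length_nonneg by metis
qed

lemma closure_length_le_length:
  assumes net: "network V E c" and e: "e \<in> E"
  shows "closure_length E c e \<le> c e"
proof -
  have "\<forall>e\<in>E. \<exists>x y. x \<in> V \<and> y \<in> V \<and> x \<noteq> y \<and> e = {x, y}"
    using net by (simp add: network_def)
  then obtain x y where xy: "x \<in> V" "y \<in> V" "x \<noteq> y" "e = {x, y}" using e by blast
  then have "is_walk E x y [x, y]" using e by (simp add: is_walk_def)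
  then have "closure_length E c {x, y} \<le> path_length c [x, y]"
    by (rule closure_length_le_walk[OF net xy(1-3)])
  then show ?thesis using xy(4) by simp
qed

lemma closure_length_triangle:
  assumes net: "network V E c" and V: "a \<in> V" "w \<in> V" "b \<in> V"
    and distinct: "a \<noteq> w" "w \<noteq> b" "a \<noteq> b"
  shows "closure_length E c {a, b} \<le> closure_length E c {a, w} + closure_length E c {w, b}"
proof -
  obtain p1 where p1: "is_path E a w p1" "closure_length E c {a, w} = path_length c p1"
    using closure_length_attained[OF net V(1,2) distinct(1)] by blast
  obtain p2 where p2: "is_path E w b p2" "closure_length E c {w, b} = path_length c p2"
    using closure_length_attained[OF net V(2,3) distinct(2)] by blast
  have walks: "is_walk E a w p1" "is_walk E w b p2" using p1 p2 by (simp_all add: is_path_iff_walk)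
  then have "closure_length E c {a, b} \<le> path_length c (p1 @ tl p2)"
    by (intro closure_length_le_walk[OF net V(1,3) distinct(3)] is_walk_join)
  also have "\<dots> = path_length c p1 + path_length c p2"
    using walks by (intro path_length_join) (auto simp: is_walk_def)
  finally show ?thesis using p1(2) p2(2) by simp
qed

section \<open>Eliminating non-terminal vertices of degree two\<close>

lemma r_forest_nonterminal_degree:
  assumes rf: "r_forest E' R F" and fin: "finite F" and w: "w \<in> \<Union> F" "w \<notin> terminals R"
  shows "2 \<le> degree F w"
proof -
  obtain e where "e \<in> F" "w \<in> e" using w(1) by blast
  then obtain v u p where vu: "(v, u) \<in> set R" and p: "is_path F v u p" and "e \<in> path_edges p"
    using rf unfolding r_forest_def by blast
  then have "w \<in> set p" using \<open>w \<in> e\<close> path_edge_subset_set by blast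
  moreover have "w \<noteq> v" "w \<noteq> u" using w(2) pair_in_terminals[OF vu] by auto
  ultimately obtain p1 p2 where p12: "p = p1 @ w # p2" "p1 \<noteq> []" "p2 \<noteq> []"
    using path_split_interior[OF p] by blast
  have "last p1 \<in> set p1" "hd p2 \<in> set p2" using p12 by simp_all
  moreover have "set p1 \<inter> set p2 = {}" using p p12 by (auto simp: is_path_iff_walk)
  ultimately have "last p1 \<noteq> hd p2" by (metis disjoint_iff)
  then have "{last p1, w} \<noteq> {w, hd p2}" by (auto simp: doubleton_eq_iff)
  then have two: "card {{last p1, w}, {w, hd p2}} = 2" by simp
  have "{{last p1, w}, {w, hd p2}} \<subseteq> {e \<in> F. w \<in> e}"
    using p p12 by (auto simp: is_path_iff_walk is_walk_def path_edges_split_at)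
  then have "card {{last p1, w}, {w, hd p2}} \<le> degree F w"
    unfolding degree_def using fin by (intro card_mono) simp_all
  then show ?thesis using two by simp
qed

lemma degree_two_vertexI:
  assumes "is_forest F" "\<forall>e\<in>F. card e = 2" "degree F w = 2"
  obtains a b where "degree_two_vertex F a w b"
proof -
  obtain e1 e2 where at_w: "{e \<in> F. w \<in> e} = {e1, e2}" "e1 \<noteq> e2"
    using assms(3) unfolding degree_def card_2_iff by blast
  then have "e1 \<in> F" "w \<in> e1" "e2 \<in> F" "w \<in> e2" by blast+
  then obtain a b where a: "a \<noteq> w" "e1 = {w, a}" and b: "b \<noteq> w" "e2 = {w, b}"
    using assms(2) card_2_other by metis
  have "a \<noteq> b" using at_w(2) a b by blast
  moreover have "{e \<in> F. w \<in> e} = {{a, w}, {w, b}}" using at_w a b by (simp add: insert_commute)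
  ultimately have "degree_two_vertex F a w b"
    using assms(1) a b by unfold_locales auto
  then show ?thesis ..
qed

lemma card_terminals_le: "card (terminals R) \<le> 2 * length R"
proof -
  have "card (terminals R) \<le> card (fst ` set R) + card (snd ` set R)"
    unfolding terminals_def by (rule card_Un_le)
  also have "\<dots> \<le> length R + length R"
    by (intro add_mono order.trans[OF card_image_le card_length]) simp_all
  finally show ?thesis by simp
qed

lemma r_forest_card_nonterminal_vertices:
  assumes rf: "r_forest E' R F" and fin: "finite F" and two: "\<forall>e\<in>F. card e = 2"
    and no_deg2: "\<forall>v\<in>\<Union> F - terminals R. degree F v \<noteq> 2"
  shows "card (nonterminal_vertices R F) \<le> 2 * length R - 2"
proof (cases "F = {}")
  case False
  have "\<forall>v\<in>\<Union> F - terminals R. 3 \<le> degree F v"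
  proof
    fix v assume v: "v \<in> \<Union> F - terminals R"
    then have "2 \<le> degree F v" using r_forest_nonterminal_degree[OF rf fin] by blast
    moreover have "degree F v \<noteq> 2" using v no_deg2 by blast
    ultimately show "3 \<le> degree F v" by linarith
  qed
  moreover have "is_forest F" using rf by (simp add: r_forest_def)
  ultimately have "card (\<Union> F - terminals R) + 2 \<le> card (\<Union> F \<inter> terminals R)"
    using card_nonterminals_le[OF fin _ two False] by blast
  also have "\<dots> \<le> card (terminals R)"
    by (intro card_mono) (auto simp: terminals_def)
  also have "\<dots> \<le> 2 * length R" by (rule card_terminals_le)
  finally show ?thesis by (simp add: nonterminal_vertices_def forest_vertices_def)
qed (simp add: nonterminal_vertices_def forest_vertices_def)

lemma (in degree_two_vertex) shortcut_closure_r_forest: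
  assumes net: "network V E c" and rf: "r_forest (closure_edges V) R F" and w: "w \<notin> terminals R"
    and pairs: "\<forall>(v, u)\<in>set R. v \<noteq> u"
    and mono: "\<forall>ts ts'. length ts = length R \<longrightarrow> list_all2 (\<le>) ts ts' \<longrightarrow> \<Phi> ts \<le> \<Phi> ts'"
  shows "r_forest (closure_edges V) R (shortcut F a w b)"
    and "F_val (closure_length E c) R \<Phi> (shortcut F a w b) \<le> F_val (closure_length E c) R \<Phi> F"
proof -
  let ?l = "closure_length E c"
  have sub: "F \<subseteq> closure_edges V" using rf by (simp add: r_forest_def)
  have V: "a \<in> V" "w \<in> V" "b \<in> V"
    using aw_in wb_in sub unfolding closure_edges_def by (auto simp: doubleton_eq_iff)
  then have "{a, b} \<in> closure_edges V" using distinct unfolding closure_edges_def by blast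
  then show "r_forest (closure_edges V) R (shortcut F a w b)"
    using shortcut_r_forest[OF rf w] by blast
  have "finite F" using sub finite_closure_edges net by (metis finite_subset network_def)
  moreover have "\<forall>e\<in>F. 0 \<le> ?l e"
    using sub closure_length_nonneg[OF net] unfolding closure_edges_def by blast
  moreover have "?l {a, b} \<le> ?l {a, w} + ?l {w, b}"
    using closure_length_triangle[OF net V] distinct by simp
  ultimately show "F_val ?l R \<Phi> (shortcut F a w b) \<le> F_val ?l R \<Phi> F"
    using F_val_shortcut[OF rf _ w pairs _ _ mono] by blast
qed

lemma steiner_reduction:
  assumes net: "network V E c" and pairs: "\<forall>(v, u)\<in>set R. v \<noteq> u"
    and mono: "\<forall>ts ts'. length ts = length R \<longrightarrow> list_all2 (\<le>) ts ts' \<longrightarrow> \<Phi> ts \<le> \<Phi> ts'"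
    and "r_forest (closure_edges V) R F"
  shows "\<exists>F'. r_forest (closure_edges V) R F' \<and>
    F_val (closure_length E c) R \<Phi> F' \<le> F_val (closure_length E c) R \<Phi> F \<and>
    card (nonterminal_vertices R F') \<le> 2 * length R - 2"
  using assms(4)
proof (induction "card F" arbitrary: F rule: less_induct)
  case less
  have sub: "F \<subseteq> closure_edges V" and forest: "is_forest F"
    using less.prems by (simp_all add: r_forest_def)
  have fin: "finite F" using sub finite_closure_edges net by (metis finite_subset network_def)
  have two: "\<forall>e\<in>F. card e = 2" using sub card_closure_edge by blast
  show ?case
  proof (cases "\<exists>w\<in>\<Union> F - terminals R. degree F w = 2")
    case True
    then obtain w where w: "w \<notin> terminals R" "degree F w = 2" by blast
    obtain a b where "degree_two_vertex F a w b"
      using degree_two_vertexI[OF forest two w(2)] .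
    then interpret degree_two_vertex F a w b .
    obtain F' where "r_forest (closure_edges V) R F'"
      "F_val (closure_length E c) R \<Phi> F' \<le> F_val (closure_length E c) R \<Phi> (shortcut F a w b)"
      "card (nonterminal_vertices R F') \<le> 2 * length R - 2"
      using less.hyps[OF card_shortcut[OF fin]] shortcut_closure_r_forest[OF net less.prems w(1) pairs mono]
      by blast
    then show ?thesis
      using shortcut_closure_r_forest(2)[OF net less.prems w(1) pairs mono] by (meson order.trans)
  next
    case False
    then show ?thesis
      using r_forest_card_nonterminal_vertices[OF less.prems fin two] less.prems by blast
  qed
qed

theorem lemma3:
  fixes V :: "'v set" and E :: "'v set set" and c :: "'v set \<Rightarrow> real"
    and R :: "('v \<times> 'v) list" and \<Phi> :: "real list \<Rightarrow> real" and F :: "'v set set"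
  assumes net: "network V E c"
    and r2: "length R \<ge> 2"
    and pairs: "\<forall>(v, u) \<in> set R. v \<in> V \<and> u \<in> V \<and> v \<noteq> u"
    and mono: "\<forall>ts ts'. length ts = length R \<longrightarrow> list_all2 (\<le>) ts ts' \<longrightarrow> \<Phi> ts \<le> \<Phi> ts'"
    and F: "r_forest E R F"
  shows "\<exists>Fh. r_forest (closure_edges V) R Fh \<and>
           F_val (closure_length E c) R \<Phi> Fh \<le> F_val c R \<Phi> F \<and>
           card (nonterminal_vertices R Fh) \<le> 2 * length R - 2"
proof -
  have E_closure: "E \<subseteq> closure_edges V"
    using net unfolding network_def closure_edges_def by blast
  have F_E: "F \<subseteq> E" using F by (simp add: r_forest_def)
  have rf: "r_forest (closure_edges V) R F"
    using F F_E E_closure by (auto simp: r_forest_def)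
  have fin: "finite F"
    using F_E E_closure finite_closure_edges net by (meson finite_subset network_def)
  have "F_val (closure_length E c) R \<Phi> F \<le> F_val c R \<Phi> F"
    using F_val_mono_lengths[OF fin _ mono] closure_length_le_length[OF net] F_E by blast
  moreover have "\<forall>(v, u)\<in>set R. v \<noteq> u" using pairs by blast
  then obtain Fh where "r_forest (closure_edges V) R Fh"
    "F_val (closure_length E c) R \<Phi> Fh \<le> F_val (closure_length E c) R \<Phi> F"
    "card (nonterminal_vertices R Fh) \<le> 2 * length R - 2"
    using steiner_reduction[OF net _ mono rf] by blast
  ultimately show ?thesis by (meson order.trans)
qed

end
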